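(* Let $\hat H(w)=\frac1{1+w}$. Let $(\alpha,\beta)\in\mathbb{R}^2$ satisfy $\alpha<2$, $\beta>\alpha-1$, and one of: (a) $-8<\alpha<2$ and $-16-4\alpha<\beta<\alpha^2/4$; (b) $\alpha^2/4\le\beta\le 1$; (c) $1<\beta<16$, $\beta\ge\alpha^2/4$, and $\alpha<2\big(8-8\beta^{1/4}+\sqrt\beta\big)$. Then for every $\tilde\tau>0$, $\Phi(w)=0$ has no root on the imaginary axis and all its roots satisfy $\operatorname{Re} w<0$; i.e. the equilibrium is locally asymptotically stable for every mean delay. (This is the region bounded by the line $\beta=-4\alpha-16$, the curve $\alpha=2(8-8\beta^{1/4}+\sqrt\beta)$ and the line $\beta=\alpha-1$, and it contains the kernel-independent region $\{|\alpha|-1<\beta<1\}$.)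
   Context: For a delay-to-time-constant ratio $\tilde\tau>0$ and $\alpha,\beta\in\mathbb{R}$, the rescaled characteristic equation of the linearized coupled Wilson–Cowan system with kernel transform $\hat H$ is $$\Phi(w):=(w+\tilde\tau)^4-\alpha\,\tilde\tau^2(w+\tilde\tau)^2\hat H(w)^2+\beta\,\tilde\tau^4\hat H(w)^4=0.$$ For the weak Gamma kernel $h(t)=\tau^{-1}e^{-t/\tau}$ (mean $\tau$), $\hat H(w)=(1+w)^{-1}$. The equilibrium is locally asymptotically stable iff all roots of $\Phi$ have negative real part. *)

theory Defs
  imports "HOL-Analysis.Analysis"
begin

definition Hhat :: "complex \<Rightarrow> complex" where
  "Hhat w = 1 / (1 + w)"

text \<open>Rescaled characteristic function Phi, with tau the delay-to-time-constant ratio.\<close>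
definition Phi :: "real \<Rightarrow> real \<Rightarrow> real \<Rightarrow> complex \<Rightarrow> complex" where
  "Phi \<alpha> \<beta> \<tau> w =
     (w + of_real \<tau>)^4 - of_real \<alpha> * of_real \<tau>^2 * (w + of_real \<tau>)^2 * (Hhat w)^2
     + of_real \<beta> * of_real \<tau>^4 * (Hhat w)^4"

end

theory Submission
  imports Defs
begin

text \<open>
  Put \<open>m = (w + \<tau>)(w + 1)/\<tau>\<close>. Multiplying \<open>\<Phi>(w) = 0\<close> by \<open>(1 + w)\<^sup>4/\<tau>\<^sup>4\<close> gives the biquadratic
  \<open>m\<^sup>4 - \<alpha> m\<^sup>2 + \<beta> = 0\<close>, which no longer involves \<open>\<tau>\<close>. For \<open>\<tau> > 0\<close> the map \<open>w \<mapsto> m\<close> sends the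
  closed right half-plane outside the parabola \<open>Re m + (Im m)\<^sup>2/4 < 1\<close>: this parabola is the image of
  the imaginary axis for \<open>\<tau> = 1\<close> and the envelope of these images over all \<open>\<tau>\<close>. So it suffices that
  for \<open>(\<alpha>, \<beta>)\<close> in the region all four roots \<open>m\<close> lie strictly inside the parabola. Real and purely
  imaginary roots come from real roots of \<open>t\<^sup>2 \<mp> \<alpha> t + \<beta>\<close> and are located by elementary bounds;
  any other root satisfies \<open>|m| = \<beta>\<^sup>1\<^sup>/\<^sup>4\<close> and \<open>(Re m)\<^sup>2 = (\<surd>\<beta> + \<alpha>/2)/2\<close>, and a point with
  \<open>Re m + |m| < 2\<close> is inside the parabola.
\<close>

definition inside_parabola :: "complex \<Rightarrow> bool" where
  "inside_parabola m \<longleftrightarrow> Re m + (Im m)\<^sup>2 / 4 < 1"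

definition stability_region :: "real \<Rightarrow> real \<Rightarrow> bool" where
  "stability_region \<alpha> \<beta> \<longleftrightarrow> \<alpha> < 2 \<and> \<beta> > \<alpha> - 1 \<and>
     ((-8 < \<alpha> \<and> -16 - 4*\<alpha> < \<beta> \<and> \<beta> < \<alpha>\<^sup>2/4)
      \<or> (\<alpha>\<^sup>2/4 \<le> \<beta> \<and> \<beta> \<le> 1)
      \<or> (1 < \<beta> \<and> \<beta> < 16 \<and> \<beta> \<ge> \<alpha>\<^sup>2/4 \<and> \<alpha> < 2 * (8 - 8 * root 4 \<beta> + sqrt \<beta>)))"

lemma quadratic_root_less:
  fixes p q c t :: real
  assumes root: "t\<^sup>2 - p*t + q = 0" and "p < 2*c" and "c\<^sup>2 - p*c + q > 0"
  shows "t < c"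
proof (rule ccontr)
  assume "\<not> t < c"
  have "t\<^sup>2 - p*t + q = (t - c)\<^sup>2 + (2*c - p)*(t - c) + (c\<^sup>2 - p*c + q)"
    by (simp add: algebra_simps power2_eq_square)
  also have "\<dots> > 0"
    using \<open>\<not> t < c\<close> assms(2,3) by (simp add: add_nonneg_pos)
  finally show False using root by simp
qed

lemma quadratic_nonreal_root:
  fixes \<alpha> \<beta> :: real and z :: complex
  assumes root: "z\<^sup>2 - \<alpha> * z + \<beta> = 0" and "Im z \<noteq> 0"
  shows "Re z = \<alpha>/2" and "(cmod z)\<^sup>2 = \<beta>" and "\<alpha>\<^sup>2/4 < \<beta>"
proof -
  have "Im (z\<^sup>2 - \<alpha> * z + \<beta>) = Im z * (2 * Re z - \<alpha>)"
    by (simp add: Im_power2 algebra_simps)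
  then show re: "Re z = \<alpha>/2" using root \<open>Im z \<noteq> 0\<close> by simp
  have "Re (z\<^sup>2 - \<alpha> * z + \<beta>) = (Re z)\<^sup>2 - (Im z)\<^sup>2 - \<alpha> * Re z + \<beta>"
    by (simp add: Re_power2)
  then have "(\<alpha>/2)\<^sup>2 - (Im z)\<^sup>2 - \<alpha> * (\<alpha>/2) + \<beta> = 0"
    using root re by simp
  then have im: "\<beta> = \<alpha>\<^sup>2/4 + (Im z)\<^sup>2"
    by (simp add: power2_eq_square field_simps)
  then show "(cmod z)\<^sup>2 = \<beta>" unfolding cmod_power2 re by (simp add: power_divide)
  show "\<alpha>\<^sup>2/4 < \<beta>" using im \<open>Im z \<noteq> 0\<close> by simp
qed

lemma inside_parabola_if_Re_add_norm_less:
  assumes "Re m + cmod m < 2"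
  shows "inside_parabola m"
proof -
  have "(cmod m)\<^sup>2 = (Re m)\<^sup>2 + (Im m)\<^sup>2"
    by (simp add: cmod_power2)
  then have "(2 - Re m - cmod m) * (2 - Re m + cmod m) = 4 - 4 * Re m - (Im m)\<^sup>2"
    by (simp add: algebra_simps power2_eq_square)
  moreover have "(2 - Re m - cmod m) * (2 - Re m + cmod m) > 0"
    using assms complex_Re_le_cmod[of m] by (intro mult_pos_pos) auto
  ultimately show ?thesis unfolding inside_parabola_def by linarith
qed

lemma Re_nonneg_not_inside_parabola:
  fixes \<tau> :: real and w :: complex
  assumes "\<tau> > 0" and "Re w \<ge> 0"
  shows "\<not> inside_parabola ((w + \<tau>) * (w + 1) / \<tau>)"
proof -
  define a b where "a = Re w" and "b = Im w"
  have w: "w = Complex a b" by (simp add: a_def b_def)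
  have "a \<ge> 0" using assms(2) by (simp add: a_def)
  define m where "m = (w + \<tau>) * (w + 1) / \<tau>"
  have "Re m = 1 - b\<^sup>2 / \<tau> + (a\<^sup>2 + (1 + \<tau>) * a) / \<tau>"
    using \<open>\<tau> > 0\<close> unfolding m_def w
    by (simp add: Re_divide_of_real power2_eq_square field_simps)
  moreover have "(a\<^sup>2 + (1 + \<tau>) * a) / \<tau> \<ge> 0"
    using \<open>a \<ge> 0\<close> \<open>\<tau> > 0\<close> by simp
  ultimately have re: "Re m \<ge> 1 - b\<^sup>2 / \<tau>" by linarith
  have "4 * \<tau> \<le> (2*a + 1 + \<tau>)\<^sup>2"
  proof -
    have "(2*a + 1 + \<tau>)\<^sup>2 - 4 * \<tau> = (2*a + 1 - \<tau>)\<^sup>2 + 8 * a * \<tau>"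
      by (simp add: algebra_simps power2_eq_square)
    moreover have "8 * a * \<tau> \<ge> 0" using \<open>a \<ge> 0\<close> \<open>\<tau> > 0\<close> by simp
    ultimately show ?thesis by (smt (verit) zero_le_power2)
  qed
  have "Im m = b * (2*a + 1 + \<tau>) / \<tau>"
    unfolding m_def w by (simp add: Im_divide_of_real algebra_simps)
  then have "(Im m)\<^sup>2 / 4 = b\<^sup>2 * (2*a + 1 + \<tau>)\<^sup>2 / (4 * \<tau>\<^sup>2)"
    by (simp add: power_divide power_mult_distrib)
  also have "\<dots> \<ge> b\<^sup>2 * (4 * \<tau>) / (4 * \<tau>\<^sup>2)"
    using \<open>4 * \<tau> \<le> _\<close> by (intro divide_right_mono mult_left_mono) auto
  also have "b\<^sup>2 * (4 * \<tau>) / (4 * \<tau>\<^sup>2) = b\<^sup>2 / \<tau>"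
    using \<open>\<tau> > 0\<close> by (simp add: power2_eq_square)
  finally show ?thesis using re unfolding inside_parabola_def m_def by linarith
qed

lemma Phi_eq_biquadratic:
  fixes \<tau> :: real and w m :: complex
  assumes "\<tau> \<noteq> 0" and "w \<noteq> -1"
  defines "m \<equiv> (w + \<tau>) * (w + 1) / \<tau>"
  shows "Phi \<alpha> \<beta> \<tau> w * (w + 1)^4 = (m^4 - \<alpha> * m\<^sup>2 + \<beta>) * (of_real \<tau>)^4"
proof -
  have "Hhat w * (w + 1) = 1"
    using assms(2) unfolding Hhat_def by (simp add: add.commute add_eq_0_iff)
  moreover have "m * \<tau> = (w + \<tau>) * (w + 1)"
    using assms(1) unfolding m_def by simp
  ultimately show ?thesis unfolding Phi_def by algebra
qed

lemma biquadratic_real_root_inside_parabola: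
  fixes \<alpha> \<beta> :: real and m :: complex
  assumes "\<alpha> < 2" and "\<beta> > \<alpha> - 1"
    and root: "m^4 - \<alpha> * m\<^sup>2 + \<beta> = 0" and "Im m = 0"
  shows "inside_parabola m"
proof -
  define x where "x = Re m"
  have m: "m = of_real x" using \<open>Im m = 0\<close> by (simp add: x_def complex_eq_iff)
  have "m\<^sup>2 = of_real (x\<^sup>2)" unfolding m by simp
  moreover have "m^4 = (m\<^sup>2)\<^sup>2" by simp
  ultimately have "of_real ((x\<^sup>2)\<^sup>2 - \<alpha> * x\<^sup>2 + \<beta>) = m^4 - \<alpha> * m\<^sup>2 + \<beta>"
    by simp
  then have "(x\<^sup>2)\<^sup>2 - \<alpha> * x\<^sup>2 + \<beta> = 0"
    using root of_real_eq_0_iff by metis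
  then have "x\<^sup>2 < 1"
    by (rule quadratic_root_less) (use assms(1,2) in simp_all)
  then have "x < 1" by (smt (verit) one_le_power)
  then show ?thesis unfolding inside_parabola_def m by simp
qed

lemma biquadratic_imaginary_root_inside_parabola:
  fixes \<alpha> \<beta> :: real and m :: complex
  assumes "-8 < \<alpha>" and "16 + 4*\<alpha> + \<beta> > 0"
    and root: "m^4 - \<alpha> * m\<^sup>2 + \<beta> = 0" and "Re m = 0"
  shows "inside_parabola m"
proof -
  define y where "y = Im m"
  have m: "m = \<i> * of_real y" using \<open>Re m = 0\<close> by (simp add: y_def complex_eq_iff)
  have "m\<^sup>2 = - of_real (y\<^sup>2)" unfolding m by (simp add: power_mult_distrib)
  moreover have "m^4 = (m\<^sup>2)\<^sup>2" by simp
  ultimately have "of_real ((y\<^sup>2)\<^sup>2 - (- \<alpha>) * y\<^sup>2 + \<beta>) = m^4 - \<alpha> * m\<^sup>2 + \<beta>"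
    by simp
  then have "(y\<^sup>2)\<^sup>2 - (- \<alpha>) * y\<^sup>2 + \<beta> = 0"
    using root of_real_eq_0_iff by metis
  then have "y\<^sup>2 < 4"
    by (rule quadratic_root_less) (use assms(1,2) in simp_all)
  then show ?thesis unfolding inside_parabola_def m by simp
qed

lemma stability_region_lower_bounds:
  assumes "stability_region \<alpha> \<beta>"
  shows "-8 < \<alpha>" and "16 + 4*\<alpha> + \<beta> > 0"
proof -
  have "-8 < \<alpha> \<and> 16 + 4*\<alpha> + \<beta> > 0"
  proof (cases "\<beta> < \<alpha>\<^sup>2/4")
    case True
    then show ?thesis using assms unfolding stability_region_def by auto
  next
    case False
    then have "\<beta> < 16" using assms unfolding stability_region_def by auto
    with False have "\<bar>\<alpha>\<bar>\<^sup>2 < 8\<^sup>2" by simp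
    then have "\<bar>\<alpha>\<bar> < 8" by (rule power2_less_imp_less) simp
    then have "-8 < \<alpha>" by simp
    moreover have "16 + 4*\<alpha> + \<beta> \<ge> (4 + \<alpha>/2)\<^sup>2"
      using False by (simp add: power2_eq_square algebra_simps)
    moreover have "(4 + \<alpha>/2)\<^sup>2 > 0" using \<open>-8 < \<alpha>\<close> by simp
    ultimately show ?thesis by linarith
  qed
  then show "-8 < \<alpha>" and "16 + 4*\<alpha> + \<beta> > 0" by auto
qed

lemma biquadratic_nonreal_root_inside_parabola:
  fixes \<alpha> \<beta> :: real and m :: complex
  assumes region: "stability_region \<alpha> \<beta>"
    and root: "m^4 - \<alpha> * m\<^sup>2 + \<beta> = 0" and "Re m \<noteq> 0" and "Im m \<noteq> 0"
  shows "inside_parabola m"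
proof -
  define r where "r = cmod m"
  have "r \<ge> 0" by (simp add: r_def)
  have "(m\<^sup>2)\<^sup>2 - \<alpha> * m\<^sup>2 + \<beta> = 0" using root by simp
  moreover have "Im (m\<^sup>2) \<noteq> 0" using assms(3,4) by (simp add: Im_power2)
  ultimately have re: "Re (m\<^sup>2) = \<alpha>/2" and norm: "(cmod (m\<^sup>2))\<^sup>2 = \<beta>" and "\<alpha>\<^sup>2/4 < \<beta>"
    by (rule quadratic_nonreal_root)+
  have r4: "r^4 = \<beta>" using norm by (simp add: r_def norm_power flip: power_mult)
  have r2: "r\<^sup>2 = (Re m)\<^sup>2 + (Im m)\<^sup>2" by (simp add: r_def cmod_power2)
  then have re_sq: "(Re m)\<^sup>2 = (r\<^sup>2 + \<alpha>/2) / 2" using re by (simp add: Re_power2)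
  have "\<bar>Re m\<bar> < r"
    by (rule power2_less_imp_less) (use r2 \<open>Im m \<noteq> 0\<close> \<open>r \<ge> 0\<close> in simp_all)
  show ?thesis
  proof (cases "\<beta> \<le> 1")
    case True
    with r4 have "r^4 \<le> 1" by simp
    with \<open>r \<ge> 0\<close> have "r \<le> 1" by (simp add: power_le_one_iff)
    then show ?thesis using \<open>\<bar>Re m\<bar> < r\<close>
      by (intro inside_parabola_if_Re_add_norm_less) (simp add: r_def)
  next
    case False
    with region \<open>\<alpha>\<^sup>2/4 < \<beta>\<close> have "\<beta> < 16" and "\<alpha> < 2 * (8 - 8 * root 4 \<beta> + sqrt \<beta>)"
      unfolding stability_region_def by auto
    moreover have "root 4 \<beta> = r" using r4 \<open>r \<ge> 0\<close> by (metis real_root_pos2 zero_less_numeral)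
    moreover have "sqrt \<beta> = r\<^sup>2" by (rule real_sqrt_unique) (use r4 in auto)
    ultimately have "r^4 < 2^4" and "(Re m)\<^sup>2 < (2 - r)\<^sup>2"
      using r4 re_sq by (simp_all add: power2_eq_square algebra_simps)
    moreover from \<open>r^4 < 2^4\<close> have "r < 2"
      by (rule power_less_imp_less_base) simp
    ultimately have "\<bar>Re m\<bar> < 2 - r"
      by (intro power2_less_imp_less[where x = "\<bar>Re m\<bar>"]) simp_all
    then show ?thesis
      by (intro inside_parabola_if_Re_add_norm_less) (simp add: r_def)
  qed
qed

lemma biquadratic_root_inside_parabola:
  fixes \<alpha> \<beta> :: real and m :: complex
  assumes region: "stability_region \<alpha> \<beta>" and root: "m^4 - \<alpha> * m\<^sup>2 + \<beta> = 0"
  shows "inside_parabola m"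
proof -
  consider "Im m = 0" | "Re m = 0" | "Re m \<noteq> 0" "Im m \<noteq> 0" by blast
  then show ?thesis
  proof cases
    case 1
    with region root show ?thesis unfolding stability_region_def
      by (intro biquadratic_real_root_inside_parabola) auto
  next
    case 2
    with stability_region_lower_bounds[OF region] root show ?thesis
      by (intro biquadratic_imaginary_root_inside_parabola)
  next
    case 3
    with region root show ?thesis by (rule biquadratic_nonreal_root_inside_parabola)
  qed
qed

theorem mainTheorem10:
  fixes \<alpha> \<beta> :: real
  assumes "\<alpha> < 2" and "\<beta> > \<alpha> - 1"
    and "(-8 < \<alpha> \<and> \<alpha> < 2 \<and> -16 - 4*\<alpha> < \<beta> \<and> \<beta> < \<alpha>^2/4)
       \<or> (\<alpha>^2/4 \<le> \<beta> \<and> \<beta> \<le> 1)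
       \<or> (1 < \<beta> \<and> \<beta> < 16 \<and> \<beta> \<ge> \<alpha>^2/4 \<and> \<alpha> < 2 * (8 - 8 * root 4 \<beta> + sqrt \<beta>))"
  shows "\<forall>\<tau>>0. (\<forall>y::real. Phi \<alpha> \<beta> \<tau> (\<i> * of_real y) \<noteq> 0)
                 \<and> (\<forall>w. Phi \<alpha> \<beta> \<tau> w = 0 \<longrightarrow> Re w < 0)"
proof -
  have region: "stability_region \<alpha> \<beta>"
    using assms unfolding stability_region_def by blast
  have roots_left: "Re w < 0" if "\<tau> > 0" and "Phi \<alpha> \<beta> \<tau> w = 0" for \<tau> w
  proof (rule ccontr)
    assume "\<not> Re w < 0"
    then have "w \<noteq> -1" by auto
    define m where "m = (w + \<tau>) * (w + 1) / \<tau>"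
    have "Phi \<alpha> \<beta> \<tau> w * (w + 1)^4 = (m^4 - \<alpha> * m\<^sup>2 + \<beta>) * (of_real \<tau>)^4"
      unfolding m_def using \<open>\<tau> > 0\<close> \<open>w \<noteq> -1\<close> by (intro Phi_eq_biquadratic) auto
    then have "m^4 - \<alpha> * m\<^sup>2 + \<beta> = 0" using that by simp
    with region have "inside_parabola m" by (rule biquadratic_root_inside_parabola)
    moreover have "\<not> inside_parabola m"
      unfolding m_def using \<open>\<tau> > 0\<close> \<open>\<not> Re w < 0\<close> by (intro Re_nonneg_not_inside_parabola) auto
    ultimately show False by contradiction
  qed
  then show ?thesis by fastforce
qed

end
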